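(* Let $(X,S)$ be an aperiodic linearly recurrent subshift with constant $K$ over a finite alphabet $A$, and let $\zeta=\{[a]: a\in A\}$ be the partition into $1$-cylinders. Then for all $x\in X$, $$\frac{1}{K}\leq \underline{\mathcal{R}}_{\zeta}(x)\leq \overline{\mathcal{R}}_{\zeta}(x)\leq K.$$
   Context: $A^{\mathbb Z}$ carries the product topology and the shift $(Sx)_n=x_{n+1}$; a subshift is a closed $S$-invariant $X\subseteq A^{\mathbb Z}$. For $x\in A^{\mathbb Z}$, $L(x)$ is the set of finite words occurring in $x$, and $L(X)=\bigcup_{x\in X}L(x)$. For $u\in L(x)$, a word $w$ is a return word to $u$ (in $x$) if $wu\in L(x)$, $u$ is a prefix of $wu$, and $u$ occurs exactly twice in $wu$. A sequence $x$ is uniformly recurrent if every $u\in L(x)$ occurs infinitely often in $x$ and for each $u\in L(x)$ there is $K_u$ with $|w|\leq K_u|u|$ for every return word $w$ to $u$; $x$ is linearly recurrent with constant $K$ if it is uniformly recurrent and $|w|\leq K|u|$ for all $u\in L(x)$ and all return words $w$ to $u$. A subshift is linearly recurrent with constant $K$ if it is minimal and contains a linearly recurrent sequence with constant $K$; aperiodic means it contains no periodic point. Cylinders: $[u]=\{x\in X: x_0\cdots x_{|u|-1}=u\}$. For measurable $U\subseteq X$, $\tau(U)=\inf\{k\geq1: S^kU\cap U\neq\emptyset\}$; $\zeta_n=\zeta\vee S^{-1}\zeta\vee\cdots\vee S^{-n+1}\zeta$, $\zeta_n(x)$ is the atom containing $x$, $\underline{\mathcal{R}}_{\zeta}(x)=\liminf_n\tau(\zeta_n(x))/n$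 and $\overline{\mathcal{R}}_{\zeta}(x)=\limsup_n\tau(\zeta_n(x))/n$. *)

theory Defs
  imports "HOL-Analysis.Analysis"
begin

definition shift :: "(int \<Rightarrow> 'a) \<Rightarrow> (int \<Rightarrow> 'a)" where
  "shift x = (\<lambda>n. x (n + 1))"

definition prodtop :: "(int \<Rightarrow> 'a) topology" where
  "prodtop = product_topology (\<lambda>_. discrete_topology UNIV) UNIV"

definition subshift :: "(int \<Rightarrow> 'a) set \<Rightarrow> bool" where
  "subshift X \<longleftrightarrow> closedin prodtop X \<and> shift ` X = X"

definition minimal_subshift :: "(int \<Rightarrow> 'a) set \<Rightarrow> bool" where
  "minimal_subshift X \<longleftrightarrow> subshift X \<and> X \<noteq> {} \<and>
     (\<forall>Y. subshift Y \<and> Y \<subseteq> X \<and> Y \<noteq> {} \<longrightarrow> Y = X)"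

definition aperiodic :: "(int \<Rightarrow> 'a) set \<Rightarrow> bool" where
  "aperiodic X \<longleftrightarrow> (\<forall>x\<in>X. \<forall>p::nat. p \<ge> 1 \<longrightarrow> (shift ^^ p) x \<noteq> x)"

definition occurs_seq :: "(int \<Rightarrow> 'a) \<Rightarrow> 'a list \<Rightarrow> int \<Rightarrow> bool" where
  "occurs_seq x u i \<longleftrightarrow> (\<forall>k<length u. x (i + int k) = u ! k)"

definition lang :: "(int \<Rightarrow> 'a) \<Rightarrow> 'a list set" where
  "lang x = {u. \<exists>i. occurs_seq x u i}"

definition occurs_word :: "'a list \<Rightarrow> 'a list \<Rightarrow> nat \<Rightarrow> bool" where
  "occurs_word v u i \<longleftrightarrow> i + length u \<le> length v \<and> take (length u) (drop i v) = u"

definition return_word :: "(int \<Rightarrow> 'a) \<Rightarrow> 'a list \<Rightarrow> 'a list \<Rightarrow> bool" where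
  "return_word x u w \<longleftrightarrow> w @ u \<in> lang x \<and> take (length u) (w @ u) = u \<and>
     card {i. occurs_word (w @ u) u i} = 2"

definition uniformly_recurrent :: "(int \<Rightarrow> 'a) \<Rightarrow> bool" where
  "uniformly_recurrent x \<longleftrightarrow>
     (\<forall>u\<in>lang x. u \<noteq> [] \<longrightarrow> infinite {i. occurs_seq x u i}) \<and>
     (\<forall>u\<in>lang x. u \<noteq> [] \<longrightarrow>
        (\<exists>Ku::real. \<forall>w. return_word x u w \<longrightarrow> real (length w) \<le> Ku * real (length u)))"

definition linearly_recurrent :: "(int \<Rightarrow> 'a) \<Rightarrow> real \<Rightarrow> bool" where
  "linearly_recurrent x K \<longleftrightarrow> uniformly_recurrent x \<and>
     (\<forall>u\<in>lang x. u \<noteq> [] \<longrightarrow>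
        (\<forall>w. return_word x u w \<longrightarrow> real (length w) \<le> K * real (length u)))"

definition linearly_recurrent_subshift :: "(int \<Rightarrow> 'a) set \<Rightarrow> real \<Rightarrow> bool" where
  "linearly_recurrent_subshift X K \<longleftrightarrow> minimal_subshift X \<and> (\<exists>x\<in>X. linearly_recurrent x K)"

definition cyl :: "(int \<Rightarrow> 'a) set \<Rightarrow> 'a list \<Rightarrow> (int \<Rightarrow> 'a) set" where
  "cyl X u = {x\<in>X. \<forall>k<length u. x (int k) = u ! k}"

definition one_cylinders :: "(int \<Rightarrow> 'a) set \<Rightarrow> (int \<Rightarrow> 'a) set set" where
  "one_cylinders X = {cyl X [a] | a. a \<in> (UNIV :: 'a set)}"

text \<open>The atom of zeta_n = zeta v S^-1 zeta v ... v S^-(n-1) zeta containing x,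
  for a partition P of X.\<close>
definition join_atom :: "(int \<Rightarrow> 'a) set \<Rightarrow> (int \<Rightarrow> 'a) set set \<Rightarrow> nat \<Rightarrow> (int \<Rightarrow> 'a) \<Rightarrow> (int \<Rightarrow> 'a) set" where
  "join_atom X P n x = {y\<in>X. \<forall>k<n. \<forall>U\<in>P. ((shift ^^ k) y \<in> U \<longleftrightarrow> (shift ^^ k) x \<in> U)}"

definition tau :: "(int \<Rightarrow> 'a) set \<Rightarrow> nat" where
  "tau U = Inf {k::nat. k \<ge> 1 \<and> (shift ^^ k) ` U \<inter> U \<noteq> {}}"

definition lower_rec :: "(int \<Rightarrow> 'a) set \<Rightarrow> (int \<Rightarrow> 'a) set set \<Rightarrow> (int \<Rightarrow> 'a) \<Rightarrow> ereal" where
  "lower_rec X P x = liminf (\<lambda>n. ereal (real (tau (join_atom X P n x)) / real n))"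

definition upper_rec :: "(int \<Rightarrow> 'a) set \<Rightarrow> (int \<Rightarrow> 'a) set set \<Rightarrow> (int \<Rightarrow> 'a) \<Rightarrow> ereal" where
  "upper_rec X P x = limsup (\<lambda>n. ereal (real (tau (join_atom X P n x)) / real n))"

end

theory Submission
  imports Defs
begin

(* The upper bound: by minimality the word x[0,n) occurs in the linearly recurrent point x0
  of X, and its next occurrence comes within K n; translating x0 to these two occurrences
  gives a return time at most K n of the atom of x in zeta_n.
  The lower bound: a return time k of that atom yields a point y of X whose window y[0,n+k)
  has period k. By aperiodicity the linearly recurrent point x0 is not k-periodic, so to the
  left of some occurrence of that window there is a last defect x0 j /= x0 (j+k), followed by
  a k-periodic run of length at least n+1. The next occurrence of x0[j,j+k] carries the same
  defect and hence lies beyond that run, while linear recurrence places it within K (k+1)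
  of j. So n+1 <= K (k+1), which after dividing by n gives the liminf bound 1/K. *)

lemma funpow_shift: "(shift ^^ k) y = (\<lambda>t. y (t + int k))"
  by (induction k) (auto simp: shift_def algebra_simps)

lemma subshift_translate_mem:
  assumes "subshift X" "y \<in> X"
  shows "(\<lambda>t. y (t + i)) \<in> X"
proof -
  have shift_X: "shift ` X = X" using assms(1) by (simp add: subshift_def)
  have forward: "(\<lambda>t. y (t + int m)) \<in> X" for m
  proof (induction m)
    case (Suc m)
    then have "shift (\<lambda>t. y (t + int m)) \<in> X" using shift_X by blast
    then show ?case by (simp add: shift_def algebra_simps)
  qed (use assms(2) in simp)
  have backward: "(\<lambda>t. y (t - int m)) \<in> X" for m
  proof (induction m)
    case (Suc m)
    then obtain z where z: "z \<in> X" "shift z = (\<lambda>t. y (t - int m))"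
      using shift_X by (metis imageE)
    have "z t = y (t - int (Suc m))" for t
      using fun_cong[OF z(2), of "t - 1"] by (simp add: shift_def algebra_simps)
    then show ?case using z(1) by presburger
  qed (use assms(2) in simp)
  show ?thesis
    using forward[of "nat i"] backward[of "nat (- i)"] by (cases "i \<ge> 0") simp_all
qed

lemma subshift_funpow_shift_mem: "subshift X \<Longrightarrow> y \<in> X \<Longrightarrow> (shift ^^ k) y \<in> X"
  using subshift_translate_mem[of X y "int k"] by (simp add: funpow_shift)

definition window :: "(int \<Rightarrow> 'a) \<Rightarrow> int \<Rightarrow> nat \<Rightarrow> 'a list" where
  "window x a l = map (\<lambda>t. x (a + int t)) [0..<l]"

lemma length_window [simp]: "length (window x a l) = l"
  by (simp add: window_def)

lemma nth_window [simp]: "k < l \<Longrightarrow> window x a l ! k = x (a + int k)"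
  by (simp add: window_def)

lemma window_eq_Nil_iff [simp]: "window x a l = [] \<longleftrightarrow> l = 0"
  by (simp add: window_def)

lemma occurs_seq_window: "occurs_seq x (window x a l) a"
  by (simp add: occurs_seq_def)

lemma window_in_lang: "window x a l \<in> lang x"
  unfolding lang_def using occurs_seq_window by blast

lemma occurs_word_window_iff:
  "occurs_word (window x a l) u i \<longleftrightarrow> i + length u \<le> l \<and> occurs_seq x u (a + int i)"
  by (auto simp: occurs_word_def occurs_seq_def list_eq_iff_nth_eq algebra_simps)

lemma occurs_seq_transfer:
  assumes "occurs_seq x v r" "occurs_seq x v q" "occurs_seq x u (r + int d)"
    and "d + length u \<le> length v"
  shows "occurs_seq x u (q + int d)"
  using assms by (auto simp: occurs_seq_def add.assoc simp flip: of_nat_add)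

section \<open>Return words and recurrence\<close>

lemma return_word_between_occurrences:
  assumes ur: "occurs_seq x u r" and uq: "occurs_seq x u q" and "r < q"
  obtains r' where "r < r'" "r' \<le> q" "occurs_seq x u r'"
    "return_word x u (window x r (nat (r' - r)))"
proof -
  define P where "P d \<longleftrightarrow> 0 < d \<and> occurs_seq x u (r + int d)" for d
  define d where "d = (LEAST d. P d)"
  have "P (nat (q - r))" using uq \<open>r < q\<close> by (simp add: P_def)
  then have Pd: "P d" and d_le: "d \<le> nat (q - r)"
    unfolding d_def by (auto intro: LeastI Least_le)
  have no_occurrence: "\<not> occurs_seq x u (r + int i)" if "0 < i" "i < d" for i
    using not_less_Least[of i P] that unfolding d_def[symmetric] by (auto simp: P_def)
  define w where "w = window x r d"
  have u_at_d: "u ! k = x (r + int (d + k))" if "k < length u" for k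
    using Pd that by (auto simp: P_def occurs_seq_def algebra_simps)
  have wu: "w @ u = window x r (d + length u)"
    by (auto simp: list_eq_iff_nth_eq w_def nth_append u_at_d)
  have "occurs_word (w @ u) u i \<longleftrightarrow> i = 0 \<or> i = d" for i
    unfolding wu occurs_word_window_iff
    using no_occurrence[of i] ur Pd by (cases "i = 0"; cases "i < d"; auto simp: P_def)
  then have "{i. occurs_word (w @ u) u i} = {0, d}" by auto
  moreover have "take (length u) (w @ u) = u"
    using ur unfolding wu by (auto simp: list_eq_iff_nth_eq occurs_seq_def)
  ultimately have "return_word x u w"
    using Pd wu window_in_lang by (simp add: return_word_def P_def)
  then show thesis
    using Pd d_le \<open>r < q\<close> by (intro that[of "r + int d"]) (auto simp: w_def P_def)
qed

lemma uniformly_recurrent_occurs_after: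
  assumes ur: "uniformly_recurrent x" and "u \<noteq> []" and uq: "occurs_seq x u q"
  shows "\<exists>t>q. occurs_seq x u t"
proof (rule ccontr)
  assume "\<not> ?thesis"
  then have last: "\<And>t. q < t \<Longrightarrow> \<not> occurs_seq x u t" by auto
  have "u \<in> lang x" using uq by (auto simp: lang_def)
  then obtain B where B: "\<And>w. return_word x u w \<Longrightarrow> real (length w) \<le> B"
    using ur \<open>u \<noteq> []\<close> unfolding uniformly_recurrent_def by blast
  define V where "V = window x q (length u + nat \<lceil>B\<rceil>)"
  have Vq: "occurs_seq x V q" unfolding V_def by (rule occurs_seq_window)
  have "V \<noteq> []" using \<open>u \<noteq> []\<close> by (simp add: V_def)
  then have "infinite {i. occurs_seq x V i}"
    using ur window_in_lang unfolding uniformly_recurrent_def V_def by blast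
  then obtain r where Vr: "occurs_seq x V r" and "r \<noteq> q"
    using infinite_imp_nonempty[OF Diff_infinite_finite[of "{q}"]] by blast
  \<comment> \<open>V begins with u, so r is an occurrence of u too; every later occurrence of u
    within distance B of r therefore reappears after q.\<close>
  have ur: "occurs_seq x u r"
    using occurs_seq_transfer[OF Vq Vr, of u 0] uq by (simp add: V_def)
  with last \<open>r \<noteq> q\<close> have "r < q" by force
  then obtain r' where "r < r'" "occurs_seq x u r'"
    and rw: "return_word x u (window x r (nat (r' - r)))"
    using return_word_between_occurrences[OF ur uq] by blast
  have "real (nat (r' - r)) \<le> real (nat \<lceil>B\<rceil>)"
    using order_trans[OF B[OF rw] real_nat_ceiling_ge] by (simp only: length_window)
  then have "nat (r' - r) + length u \<le> length V" by (simp add: V_def)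
  then have "occurs_seq x u (q + int (nat (r' - r)))"
    using occurs_seq_transfer[OF Vr Vq, of u "nat (r' - r)"] \<open>r < r'\<close> \<open>occurs_seq x u r'\<close>
    by simp
  then show False using last \<open>r < r'\<close> by force
qed

lemma uniformly_recurrent_occurs_beyond:
  assumes ur: "uniformly_recurrent x" and "u \<noteq> []" and "occurs_seq x u i"
  obtains r where "N < r" "occurs_seq x u r"
proof -
  have "\<exists>r\<ge>i + int m. occurs_seq x u r" for m
  proof (induction m)
    case (Suc m)
    then obtain r where "i + int m \<le> r" "occurs_seq x u r" by blast
    moreover obtain t where "r < t" "occurs_seq x u t"
      using uniformly_recurrent_occurs_after[OF ur \<open>u \<noteq> []\<close> \<open>occurs_seq x u r\<close>] by blast
    ultimately show ?case by (intro exI[of _ t]) auto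
  qed (use \<open>occurs_seq x u i\<close> in auto)
  then obtain r where "i + int (nat (N - i) + 1) \<le> r" "occurs_seq x u r" by blast
  then show thesis by (intro that[of r]) (auto split: if_splits)
qed

lemma linearly_recurrent_next_occurrence:
  assumes lr: "linearly_recurrent x K" and "u \<noteq> []" and ur: "occurs_seq x u r"
  obtains r' where "r < r'" "occurs_seq x u r'" "real_of_int (r' - r) \<le> K * real (length u)"
proof -
  obtain q where "r < q" "occurs_seq x u q"
    using uniformly_recurrent_occurs_after[OF _ \<open>u \<noteq> []\<close> ur] lr
    by (auto simp: linearly_recurrent_def)
  then obtain r' where "r < r'" "occurs_seq x u r'" "return_word x u (window x r (nat (r' - r)))"
    using return_word_between_occurrences[OF ur] by blast
  moreover have "u \<in> lang x" using ur by (auto simp: lang_def)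
  ultimately have "real (nat (r' - r)) \<le> K * real (length u)"
    using lr \<open>u \<noteq> []\<close> unfolding linearly_recurrent_def by (metis length_window)
  then show thesis using \<open>r < r'\<close> \<open>occurs_seq x u r'\<close> by (intro that) auto
qed

lemma linearly_recurrent_periodic_run_le:
  assumes lr: "linearly_recurrent x K"
    and defect: "x j \<noteq> x (j + int k)"
    and periodic: "\<And>i. j < i \<Longrightarrow> i < j + int m \<Longrightarrow> x i = x (i + int k)"
  shows "real m \<le> K * real (k + 1)"
proof -
  define s where "s = window x j (k + 1)"
  obtain r where "j < r" and sr: "occurs_seq x s r" and r_le: "real_of_int (r - j) \<le> K * real (k + 1)"
    using linearly_recurrent_next_occurrence[OF lr _ occurs_seq_window, of j "k + 1"]
    unfolding s_def by auto
  have "x r = x j" "x (r + int k) = x (j + int k)"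
    using sr by (auto simp: occurs_seq_def s_def dest: spec[of _ 0] spec[of _ k])
  then have "\<not> r < j + int m" using periodic[of r] \<open>j < r\<close> defect by auto
  then show ?thesis using r_le by linarith
qed

section \<open>Minimal subshifts\<close>

lemma lang_shift: "lang (shift y) = lang y"
proof -
  have "occurs_seq (shift y) u i \<longleftrightarrow> occurs_seq y u (i + 1)" for u i
    by (simp add: occurs_seq_def shift_def algebra_simps)
  then show ?thesis
    unfolding lang_def by (metis diff_add_cancel)
qed

lemma closedin_lang_subset: "closedin prodtop {y :: int \<Rightarrow> 'a. lang y \<subseteq> L}"
proof -
  have topspace: "topspace (prodtop :: (int \<Rightarrow> 'a) topology) = UNIV"
    by (simp add: prodtop_def PiE_UNIV_domain)
  have "openin prodtop (UNIV - {y :: int \<Rightarrow> 'a. lang y \<subseteq> L})"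
  proof (subst openin_subopen, intro ballI)
    fix y :: "int \<Rightarrow> 'a"
    assume "y \<in> UNIV - {y. lang y \<subseteq> L}"
    then obtain u i where "u \<notin> L" and yu: "occurs_seq y u i" by (auto simp: lang_def)
    define I where "I = {i..<i + int (length u)}"
    define T where "T = (\<Pi>\<^sub>E j\<in>UNIV. if j \<in> I then {y j} else UNIV)"
    have "openin prodtop T"
      unfolding prodtop_def T_def
      by (rule product_topology_basis) (auto intro: finite_subset[of _ I] simp: I_def)
    moreover have "y \<in> T" by (simp add: T_def PiE_UNIV_domain)
    moreover have "z \<in> T \<longleftrightarrow> (\<forall>j\<in>I. z j = y j)" for z
      by (force simp: T_def PiE_UNIV_domain Pi_iff)
    then have "occurs_seq z u i" if "z \<in> T" for z
      using that yu by (auto simp: I_def occurs_seq_def)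
    then have "T \<subseteq> UNIV - {y. lang y \<subseteq> L}" using \<open>u \<notin> L\<close> by (auto simp: lang_def)
    ultimately show "\<exists>T. openin prodtop T \<and> y \<in> T \<and> T \<subseteq> UNIV - {y. lang y \<subseteq> L}"
      by blast
  qed
  then show ?thesis by (simp add: closedin_def topspace)
qed

lemma minimal_subshift_lang_subset:
  assumes "minimal_subshift X" "x \<in> X" "y \<in> X"
  shows "lang y \<subseteq> lang x"
proof -
  define Y where "Y = X \<inter> {y. lang y \<subseteq> lang x}"
  have shift_X: "shift ` X = X" and "closedin prodtop X"
    using assms(1) by (auto simp: minimal_subshift_def subshift_def)
  then have "closedin prodtop Y" unfolding Y_def using closedin_lang_subset by blast
  moreover have "shift ` Y = Y"
  proof
    show "shift ` Y \<subseteq> Y" using shift_X by (auto simp: Y_def lang_shift)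
    show "Y \<subseteq> shift ` Y"
    proof
      fix z assume z: "z \<in> Y"
      then obtain w where "w \<in> X" "z = shift w" using shift_X by (auto simp: Y_def)
      then show "z \<in> shift ` Y" using z by (auto simp: Y_def lang_shift)
    qed
  qed
  moreover have "Y \<subseteq> X" "Y \<noteq> {}" using assms(2) by (auto simp: Y_def)
  ultimately have "Y = X" using assms(1) by (auto simp: minimal_subshift_def subshift_def)
  then show ?thesis using assms(3) by (auto simp: Y_def)
qed

section \<open>Return times of the atoms of the 1-cylinder partition\<close>

definition return_times :: "(int \<Rightarrow> 'a) set \<Rightarrow> nat set" where
  "return_times U = {k. 1 \<le> k \<and> (shift ^^ k) ` U \<inter> U \<noteq> {}}"

lemma tau_le: "k \<in> return_times U \<Longrightarrow> tau U \<le> k"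
  by (simp add: tau_def return_times_def cInf_lower)

lemma tau_in_return_times: "return_times U \<noteq> {} \<Longrightarrow> tau U \<in> return_times U"
  unfolding tau_def return_times_def by (rule Inf_nat_def1)

lemma join_atom_one_cylinders_iff:
  assumes "subshift X" "x \<in> X"
  shows "y \<in> join_atom X (one_cylinders X) n x \<longleftrightarrow> y \<in> X \<and> (\<forall>j<n. y (int j) = x (int j))"
proof -
  have ball_one_cylinders: "(\<forall>U\<in>one_cylinders X. P U) \<longleftrightarrow> (\<forall>a. P (cyl X [a]))" for P
    by (auto simp: one_cylinders_def)
  have mem_cyl: "(shift ^^ j) z \<in> cyl X [a] \<longleftrightarrow> z (int j) = a" if "z \<in> X" for z j a
    using subshift_funpow_shift_mem[OF assms(1) that] by (simp add: cyl_def funpow_shift)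
  have same_letter: "(\<forall>a. p = a \<longleftrightarrow> q = a) \<longleftrightarrow> p = q" for p q :: 'a
    by blast
  show ?thesis
    using assms(2) by (auto simp: join_atom_def ball_one_cylinders mem_cyl same_letter)
qed

lemma return_times_join_atom_iff:
  assumes "subshift X" "x \<in> X"
  shows "k \<in> return_times (join_atom X (one_cylinders X) n x) \<longleftrightarrow>
    1 \<le> k \<and> (\<exists>y\<in>X. \<forall>j<n. y (int j) = x (int j) \<and> y (int j + int k) = x (int j))"
proof -
  let ?J = "join_atom X (one_cylinders X) n x"
  have "(shift ^^ k) ` ?J \<inter> ?J \<noteq> {} \<longleftrightarrow> (\<exists>y\<in>?J. (shift ^^ k) y \<in> ?J)"
    by blast
  also have "\<dots> \<longleftrightarrow> (\<exists>y\<in>X. \<forall>j<n. y (int j) = x (int j) \<and> y (int j + int k) = x (int j))"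
  proof
    assume "\<exists>y\<in>?J. (shift ^^ k) y \<in> ?J"
    then obtain y where "y \<in> ?J" "(shift ^^ k) y \<in> ?J" by blast
    then show "\<exists>y\<in>X. \<forall>j<n. y (int j) = x (int j) \<and> y (int j + int k) = x (int j)"
      by (intro bexI[of _ y]) (auto simp: join_atom_one_cylinders_iff[OF assms] funpow_shift)
  next
    assume "\<exists>y\<in>X. \<forall>j<n. y (int j) = x (int j) \<and> y (int j + int k) = x (int j)"
    then obtain y where "y \<in> X" "\<forall>j<n. y (int j) = x (int j) \<and> y (int j + int k) = x (int j)"
      by blast
    then show "\<exists>y\<in>?J. (shift ^^ k) y \<in> ?J"
      using subshift_funpow_shift_mem[OF assms(1) \<open>y \<in> X\<close>, of k]
      by (intro bexI[of _ y]) (auto simp: join_atom_one_cylinders_iff[OF assms] funpow_shift)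
  qed
  finally show ?thesis by (simp add: return_times_def)
qed

lemma exists_return_time_join_atom_le:
  assumes lrs: "linearly_recurrent_subshift X K" and "x \<in> X" and "1 \<le> n"
  obtains k where "k \<in> return_times (join_atom X (one_cylinders X) n x)" "real k \<le> K * real n"
proof -
  obtain x0 where "x0 \<in> X" and lr: "linearly_recurrent x0 K" and min: "minimal_subshift X"
    using lrs by (auto simp: linearly_recurrent_subshift_def)
  then have sX: "subshift X" by (simp add: minimal_subshift_def)
  define u where "u = window x 0 n"
  have "u \<noteq> []" using \<open>1 \<le> n\<close> by (simp add: u_def)
  have "u \<in> lang x0"
    using minimal_subshift_lang_subset[OF min \<open>x0 \<in> X\<close> \<open>x \<in> X\<close>] window_in_lang
    unfolding u_def by blast
  then obtain i where ui: "occurs_seq x0 u i" by (auto simp: lang_def)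
  then obtain r where "i < r" and ur: "occurs_seq x0 u r" and r_le: "real_of_int (r - i) \<le> K * real n"
    using linearly_recurrent_next_occurrence[OF lr \<open>u \<noteq> []\<close>] by (auto simp: u_def)
  have "nat (r - i) \<in> return_times (join_atom X (one_cylinders X) n x)"
    unfolding return_times_join_atom_iff[OF sX \<open>x \<in> X\<close>]
    using \<open>i < r\<close> ui ur subshift_translate_mem[OF sX \<open>x0 \<in> X\<close>, of i]
    by (auto simp: u_def occurs_seq_def algebra_simps intro!: bexI[of _ "\<lambda>t. x0 (t + i)"])
  then show thesis using r_le \<open>i < r\<close> by (intro that) auto
qed

lemma int_last_witness:
  fixes a b :: int
  assumes "P a" "a < b"
  obtains j where "a \<le> j" "j < b" "P j" "\<And>i. j < i \<Longrightarrow> i < b \<Longrightarrow> \<not> P i"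
proof -
  define S where "S = {j. a \<le> j \<and> j < b \<and> P j}"
  have "finite S" unfolding S_def by (rule finite_subset[of _ "{a..<b}"]) auto
  moreover have "a \<in> S" using assms by (simp add: S_def)
  ultimately have "Max S \<in> S" and max: "\<And>i. i \<in> S \<Longrightarrow> i \<le> Max S"
    by (auto intro: Max_in Max_ge)
  show thesis
  proof (rule that[of "Max S"])
    show "\<not> P i" if "Max S < i" "i < b" for i
      using max[of i] \<open>Max S \<in> S\<close> that by (auto simp: S_def)
  qed (use \<open>Max S \<in> S\<close> in \<open>auto simp: S_def\<close>)
qed

lemma return_time_join_atom_ge:
  assumes lrs: "linearly_recurrent_subshift X K" and "aperiodic X" and "x \<in> X"
    and k: "k \<in> return_times (join_atom X (one_cylinders X) n x)"
  shows "real (n + 1) \<le> K * real (k + 1)"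
proof -
  obtain x0 where "x0 \<in> X" and lr: "linearly_recurrent x0 K" and min: "minimal_subshift X"
    using lrs by (auto simp: linearly_recurrent_subshift_def)
  then have sX: "subshift X" by (simp add: minimal_subshift_def)
  obtain y where "1 \<le> k" "y \<in> X"
    and y: "\<And>j. j < n \<Longrightarrow> y (int j) = x (int j) \<and> y (int j + int k) = x (int j)"
    using k unfolding return_times_join_atom_iff[OF sX \<open>x \<in> X\<close>] by blast
  define v where "v = window y 0 (n + k)"
  have "v \<noteq> []" using \<open>1 \<le> k\<close> by (simp add: v_def)
  have "v \<in> lang x0"
    using minimal_subshift_lang_subset[OF min \<open>x0 \<in> X\<close> \<open>y \<in> X\<close>] window_in_lang
    unfolding v_def by blast
  then obtain i where "occurs_seq x0 v i" by (auto simp: lang_def)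
  have "(shift ^^ k) x0 \<noteq> x0" using \<open>aperiodic X\<close> \<open>x0 \<in> X\<close> \<open>1 \<le> k\<close> by (simp add: aperiodic_def)
  then obtain b where defect: "x0 b \<noteq> x0 (b + int k)" unfolding funpow_shift fun_eq_iff by metis
  obtain r where "b < r" and vr: "occurs_seq x0 v r"
    using uniformly_recurrent_occurs_beyond[OF _ \<open>v \<noteq> []\<close> \<open>occurs_seq x0 v i\<close>] lr
    by (auto simp: linearly_recurrent_def)
  have run: "x0 (r + int t) = x0 (r + int t + int k)" if "t < n" for t
  proof -
    have "x0 (r + int t) = y (int t)" "x0 (r + int (t + k)) = y (int t + int k)"
      using vr that by (auto simp: occurs_seq_def v_def dest: spec[of _ t] spec[of _ "t + k"])
    then show ?thesis using y[OF that] by (simp add: add.assoc)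
  qed
  obtain j where "j < r" and defect_j: "x0 j \<noteq> x0 (j + int k)"
    and no_defect: "\<And>i. j < i \<Longrightarrow> i < r \<Longrightarrow> x0 i = x0 (i + int k)"
    using int_last_witness[of "\<lambda>j. x0 j \<noteq> x0 (j + int k)" b r] defect \<open>b < r\<close> by metis
  have "x0 i = x0 (i + int k)" if "j < i" "i < j + int (nat (r + int n - j))" for i
    using no_defect[OF \<open>j < i\<close>] run[of "nat (i - r)"] that \<open>j < r\<close>
    by (cases "i < r") (auto simp: add.assoc)
  then have "real (nat (r + int n - j)) \<le> K * real (k + 1)"
    by (rule linearly_recurrent_periodic_run_le[OF lr defect_j])
  then show ?thesis using \<open>j < r\<close> by linarith
qed

lemma limsup_ratio_le:
  fixes f :: "nat \<Rightarrow> real"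
  assumes "\<forall>\<^sub>F n in sequentially. f n \<le> K * real n"
  shows "limsup (\<lambda>n. ereal (f n / real n)) \<le> ereal K"
proof (rule Limsup_bounded)
  show "\<forall>\<^sub>F n in sequentially. ereal (f n / real n) \<le> ereal K"
    using assms eventually_gt_at_top[of 0]
    by eventually_elim (simp add: divide_le_eq)
qed

lemma liminf_ratio_ge:
  fixes f :: "nat \<Rightarrow> real"
  assumes "0 < K" and "\<forall>\<^sub>F n in sequentially. real n + 1 \<le> K * (f n + 1)"
  shows "ereal (1 / K) \<le> liminf (\<lambda>n. ereal (f n / real n))"
proof -
  have "(\<lambda>n. ereal (1 / K - 1 / real n)) \<longlonglongrightarrow> ereal (1 / K)"
    unfolding lim_ereal using tendsto_diff[OF tendsto_const lim_1_over_n] by simp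
  then have "ereal (1 / K) = liminf (\<lambda>n. ereal (1 / K - 1 / real n))"
    by (rule lim_imp_Liminf[OF trivial_limit_sequentially, symmetric])
  also have "\<dots> \<le> liminf (\<lambda>n. ereal (f n / real n))"
  proof (rule Liminf_mono)
    show "\<forall>\<^sub>F n in sequentially. ereal (1 / K - 1 / real n) \<le> ereal (f n / real n)"
      using assms(2) eventually_gt_at_top[of 0]
    proof eventually_elim
      case (elim n)
      then have "(real n - K) / (K * real n) \<le> (K * f n) / (K * real n)"
        using \<open>0 < K\<close> by (intro divide_right_mono) (auto simp: algebra_simps)
      then show ?case using \<open>0 < K\<close> elim by (simp add: field_simps)
    qed
  qed
  finally show ?thesis .
qed

theorem proposition2p2:
  fixes X :: "(int \<Rightarrow> 'a::finite) set" and K :: real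
  assumes "linearly_recurrent_subshift X K"
    and "aperiodic X"
    and "x \<in> X"
  shows "ereal (1 / K) \<le> lower_rec X (one_cylinders X) x
       \<and> lower_rec X (one_cylinders X) x \<le> upper_rec X (one_cylinders X) x
       \<and> upper_rec X (one_cylinders X) x \<le> ereal K"
proof -
  define f where "f n = real (tau (join_atom X (one_cylinders X) n x))" for n
  have f_bounds: "f n \<le> K * real n \<and> real n + 1 \<le> K * (f n + 1)" if "1 \<le> n" for n
  proof -
    let ?J = "join_atom X (one_cylinders X) n x"
    obtain k where k: "k \<in> return_times ?J" "real k \<le> K * real n"
      using exists_return_time_join_atom_le[OF assms(1,3) \<open>1 \<le> n\<close>] .
    then have "tau ?J \<in> return_times ?J" by (intro tau_in_return_times) blast
    from return_time_join_atom_ge[OF assms this] have "real n + 1 \<le> K * (f n + 1)"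
      by (simp add: f_def add.commute)
    moreover have "f n \<le> K * real n" using tau_le[OF k(1)] k(2) by (simp add: f_def)
    ultimately show ?thesis by blast
  qed
  have "2 \<le> K * (f 1 + 1)" using f_bounds[of 1] by simp
  moreover have "0 \<le> f 1" by (simp add: f_def)
  ultimately have "0 < K" by (smt (verit) mult_nonpos_nonneg)
  have "\<forall>\<^sub>F n in sequentially. f n \<le> K * real n \<and> real n + 1 \<le> K * (f n + 1)"
    using eventually_ge_at_top[of 1] by (rule eventually_mono) (fact f_bounds)
  then have upper: "\<forall>\<^sub>F n in sequentially. f n \<le> K * real n"
    and lower: "\<forall>\<^sub>F n in sequentially. real n + 1 \<le> K * (f n + 1)"
    by (simp_all add: eventually_conj_iff)
  have "ereal (1 / K) \<le> lower_rec X (one_cylinders X) x"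
    unfolding lower_rec_def f_def[symmetric] by (rule liminf_ratio_ge[OF \<open>0 < K\<close> lower])
  moreover have "upper_rec X (one_cylinders X) x \<le> ereal K"
    unfolding upper_rec_def f_def[symmetric] by (rule limsup_ratio_le[OF upper])
  moreover have "lower_rec X (one_cylinders X) x \<le> upper_rec X (one_cylinders X) x"
    unfolding lower_rec_def upper_rec_def by (rule Liminf_le_Limsup) simp
  ultimately show ?thesis by blast
qed

end
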